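(* Let $q,n,a,h,t$ be positive integers with $a\le q-1$, $h\le n$, $a\le t\le ah$, and suppose $t+1$ divides $q$. For $j\in\{0,1,\dots,t\}$ let $$\mathcal C_q^{(j)}(n;t)=\Big\{\mathbf x\in[q]^n:\ \sum_{i=1}^n x_i\equiv j\pmod{t+1}\Big\}.$$ Then for every $j\in\{0,1,\dots,t\}$, $\mathcal C_q^{(j)}(n;t)$ is an optimal $(a,h,t)^\circ$-AED code in $[q]^n$, i.e., it is $(a,h,t)^\circ$-AED and no $(a,h,t)^\circ$-AED code in $[q]^n$ has larger cardinality (its cardinality being $\frac{q^n}{t+1}$).
   Context: $[q]=\{0,1,\dots,q-1\}$ and $+_q$ denotes coordinatewise addition modulo $q$. Cyclic asymmetric channel: an input $\mathbf x\in[q]^n$ can produce any output $\mathbf y=\mathbf x+_q\mathbf f$, where $\mathbf f\in[q]^n$ satisfies (1) $0\le f_i\le a$ for all $i$; (2) $\sum_{i=1}^n\mathbb 1_{\{f_i\ne0\}}\le h$; (3) $\sum_{i=1}^n f_i\le t$. These are called $(a,h,t)^\circ$-asymmetric errors; $\mathrm{Out}^\circ(\mathbf x)$ denotes the set of all such outputs. A code $\mathcal C\subseteq[q]^n$ is $(a,h,t)^\circ$-AED if for all $\mathbf x\in\mathcal C$ and $\mathbf y\in\mathrm{Out}^\circ(\mathbf x)$ with $\mathbf y\ne\mathbf x$, we have $\mathbf y\notin\mathcal C$. *)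

theory Defs
  imports Main
begin

text \<open>Words of length n over [q] = {0..q-1}, represented as functions nat => nat
  with entries below q at positions < n and equal to 0 elsewhere.\<close>
definition words :: "nat \<Rightarrow> nat \<Rightarrow> (nat \<Rightarrow> nat) set" where
  "words q n = {x. (\<forall>i<n. x i < q) \<and> (\<forall>i\<ge>n. x i = 0)}"

definition err_vecs :: "nat \<Rightarrow> nat \<Rightarrow> nat \<Rightarrow> nat \<Rightarrow> nat \<Rightarrow> (nat \<Rightarrow> nat) set" where
  "err_vecs q n a h t = {f. f \<in> words q n \<and> (\<forall>i<n. f i \<le> a)
      \<and> card {i. i < n \<and> f i \<noteq> 0} \<le> h \<and> (\<Sum>i<n. f i) \<le> t}"

definition add_mod :: "nat \<Rightarrow> nat \<Rightarrow> (nat \<Rightarrow> nat) \<Rightarrow> (nat \<Rightarrow> nat) \<Rightarrow> (nat \<Rightarrow> nat)" where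
  "add_mod q n x f = (\<lambda>i. if i < n then (x i + f i) mod q else 0)"

definition Out_cyc :: "nat \<Rightarrow> nat \<Rightarrow> nat \<Rightarrow> nat \<Rightarrow> nat \<Rightarrow> (nat \<Rightarrow> nat) \<Rightarrow> (nat \<Rightarrow> nat) set" where
  "Out_cyc q n a h t x = add_mod q n x ` err_vecs q n a h t"

definition is_AED :: "nat \<Rightarrow> nat \<Rightarrow> nat \<Rightarrow> nat \<Rightarrow> nat \<Rightarrow> (nat \<Rightarrow> nat) set \<Rightarrow> bool" where
  "is_AED q n a h t C \<longleftrightarrow> C \<subseteq> words q n \<and>
     (\<forall>x\<in>C. \<forall>y\<in>Out_cyc q n a h t x. y \<noteq> x \<longrightarrow> y \<notin> C)"

definition sum_code :: "nat \<Rightarrow> nat \<Rightarrow> nat \<Rightarrow> nat \<Rightarrow> (nat \<Rightarrow> nat) set" where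
  "sum_code q n t j = {x \<in> words q n. (\<Sum>i<n. x i) mod (t + 1) = j}"

end

theory Submission
  imports Defs "HOL-Library.FuncSet" "HOL-Number_Theory.Cong"
begin

text \<open>Since t + 1 divides q, reducing coordinates modulo q does not change the coordinate
  sum modulo t + 1, whereas a nonzero error raises that sum by between 1 and t; hence the
  sum codes are AED. Translating by a word of coordinate sum d maps the class j injectively
  into the class j + d, so the t + 1 classes are equinumerous and each has q^n/(t+1) words.
  For optimality take the greedy errors v_0 < v_1 < ... < v_t of weights 0, ..., t (coordinates
  filled up to a, from the left, within the first h positions). Every difference v_l - v_k
  with k < l is a nonzero admissible error, so for an AED code C the map
  (c, k) \<mapsto> c + (v_t - v_k) is injective on C \<times> {0..t}: a collision with k < l would
  put c' = c + (v_l - v_k) in the output set of c. Hence (t + 1) |C| \<le> q^n.\<close>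

lemma bij_betw_restrict_words:
  "bij_betw (\<lambda>x. restrict x {..<n}) (words q n) (PiE {..<n} (\<lambda>_. {..<q}))"
  by (rule bij_betw_byWitness[where f' = "\<lambda>x i. if i < n then x i else 0"])
    (auto simp: words_def fun_eq_iff PiE_def extensional_def)

lemma finite_words: "finite (words q n)"
  using bij_betw_finite[OF bij_betw_restrict_words] by (simp add: finite_PiE)

lemma card_words: "card (words q n) = q ^ n"
  using bij_betw_same_card[OF bij_betw_restrict_words] by (simp add: card_PiE)

lemma add_mod_in_words: "0 < q \<Longrightarrow> add_mod q n x f \<in> words q n"
  by (simp add: add_mod_def words_def)

lemma add_mod_commute: "add_mod q n x f = add_mod q n f x"
  unfolding add_mod_def by (simp only: add.commute)

lemma add_mod_zero_left: "x \<in> words q n \<Longrightarrow> add_mod q n (\<lambda>_. 0) x = x"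
  by (simp add: add_mod_def words_def fun_eq_iff)

lemma add_mod_add_mod:
  "add_mod q n (add_mod q n x f) g = add_mod q n x (\<lambda>i. f i + g i)"
  by (simp add: add_mod_def fun_eq_iff mod_add_left_eq add.assoc)

lemma inj_on_add_mod: "inj_on (\<lambda>x. add_mod q n x f) (words q n)"
proof (rule inj_onI)
  fix x y assume x: "x \<in> words q n" and y: "y \<in> words q n"
    and eq: "add_mod q n x f = add_mod q n y f"
  show "x = y"
  proof
    fix i
    show "x i = y i"
    proof (cases "i < n")
      case True
      then have "[x i + f i = y i + f i] (mod q)"
        using fun_cong[OF eq, of i] by (simp add: add_mod_def cong_def)
      then have "[x i = y i] (mod q)" by (simp add: cong_add_rcancel_nat)
      with True x y show ?thesis by (auto simp: words_def cong_less_imp_eq_nat)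
    next
      case False
      with x y show ?thesis by (simp add: words_def)
    qed
  qed
qed

lemma add_mod_eq_self_iff:
  assumes "x \<in> words q n" "f \<in> words q n"
  shows "add_mod q n x f = x \<longleftrightarrow> f = (\<lambda>_. 0)"
proof -
  have "add_mod q n x f = x \<longleftrightarrow> add_mod q n f x = add_mod q n (\<lambda>_. 0) x"
    by (simp only: add_mod_commute[of q n x f] add_mod_zero_left[OF assms(1)])
  also have "\<dots> \<longleftrightarrow> f = (\<lambda>_. 0)"
    using assms(2) by (intro inj_on_eq_iff[OF inj_on_add_mod]) (auto simp: words_def)
  finally show ?thesis .
qed

lemma sum_add_mod_mod:
  assumes "m dvd q"
  shows "(\<Sum>i<n. add_mod q n x f i) mod m = ((\<Sum>i<n. x i) + (\<Sum>i<n. f i)) mod m"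
proof -
  have "(\<Sum>i<n. add_mod q n x f i) mod m = (\<Sum>i<n. add_mod q n x f i mod m) mod m"
    by (simp add: mod_sum_eq)
  also have "(\<Sum>i<n. add_mod q n x f i mod m) = (\<Sum>i<n. (x i + f i) mod m)"
    using assms by (intro sum.cong) (simp_all add: add_mod_def mod_mod_cancel)
  also have "(\<Sum>i<n. (x i + f i) mod m) mod m = (\<Sum>i<n. x i + f i) mod m"
    by (simp add: mod_sum_eq)
  finally show ?thesis by (simp add: sum.distrib)
qed

lemma sum_code_subset_words: "sum_code q n t j \<subseteq> words q n"
  by (auto simp: sum_code_def)

lemma add_mod_in_sum_code:
  assumes "0 < q" "(t + 1) dvd q" "x \<in> sum_code q n t j"
  shows "add_mod q n x f \<in> sum_code q n t ((j + (\<Sum>i<n. f i)) mod (t + 1))"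
  using assms sum_add_mod_mod[OF assms(2)]
  by (auto simp: sum_code_def add_mod_in_words mod_add_left_eq)

lemma card_sum_code_le:
  assumes "0 < q" "0 < n" "(t + 1) dvd q" "i \<le> t" "j \<le> t"
  shows "card (sum_code q n t i) \<le> card (sum_code q n t j)"
proof -
  define f where "f = (\<lambda>k::nat. if k = 0 then j + (t + 1) - i else 0)"
  have "(\<Sum>k<n. f k) = j + (t + 1) - i"
    using assms(2) by (simp add: f_def)
  then have "(i + (\<Sum>k<n. f k)) mod (t + 1) = (j + (t + 1)) mod (t + 1)"
    using assms(4) by simp
  also have "\<dots> = j"
    using assms(5) by (simp only: mod_add_self2) simp
  finally have "(i + (\<Sum>k<n. f k)) mod (t + 1) = j" .
  then have "(\<lambda>x. add_mod q n x f) ` sum_code q n t i \<subseteq> sum_code q n t j"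
    using add_mod_in_sum_code[OF assms(1,3)] by auto
  moreover have "inj_on (\<lambda>x. add_mod q n x f) (sum_code q n t i)"
    using inj_on_add_mod sum_code_subset_words by (rule inj_on_subset)
  moreover have "finite (sum_code q n t j)"
    using finite_words sum_code_subset_words by (rule finite_subset[rotated])
  ultimately show ?thesis by (intro card_inj_on_le)
qed

lemma card_sum_code:
  assumes "0 < q" "0 < n" "(t + 1) dvd q" "j \<le> t"
  shows "(t + 1) * card (sum_code q n t j) = q ^ n"
proof -
  have "words q n = (\<Union>i\<le>t. sum_code q n t i)"
    by (auto simp: sum_code_def)
  then have "q ^ n = card (\<Union>i\<le>t. sum_code q n t i)"
    by (metis card_words)
  also have "\<dots> = (\<Sum>i\<le>t. card (sum_code q n t i))"
    using finite_words sum_code_subset_words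
    by (intro card_UN_disjoint) (auto simp: sum_code_def intro: finite_subset)
  also have "\<dots> = (\<Sum>i\<le>t. card (sum_code q n t j))"
    using assms by (intro sum.cong refl antisym card_sum_code_le) auto
  finally show ?thesis by simp
qed

lemma sum_code_is_AED:
  assumes "(t + 1) dvd q"
  shows "is_AED q n a h t (sum_code q n t j)"
  unfolding is_AED_def
proof (intro conjI ballI impI notI sum_code_subset_words)
  fix x y
  assume x: "x \<in> sum_code q n t j" and "y \<in> Out_cyc q n a h t x"
    and y: "y \<in> sum_code q n t j" and "y \<noteq> x"
  then obtain f where f: "f \<in> err_vecs q n a h t" and y_def: "y = add_mod q n x f"
    by (auto simp: Out_cyc_def)
  have "[(\<Sum>i<n. x i) + (\<Sum>i<n. f i) = (\<Sum>i<n. x i)] (mod t + 1)"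
    using x y sum_add_mod_mod[OF assms, of n x f] by (simp add: y_def sum_code_def cong_def)
  then have "[\<Sum>i<n. f i = 0] (mod t + 1)"
    by (simp only: cong_add_lcancel_0_nat)
  moreover have "(\<Sum>i<n. f i) \<le> t"
    using f by (simp add: err_vecs_def)
  ultimately have "(\<Sum>i<n. f i) = 0"
    using cong_less_imp_eq_nat[of "\<Sum>i<n. f i" "t + 1" 0] by simp
  then have "f i = 0" for i
    using f by (cases "i < n") (auto simp: err_vecs_def words_def)
  then have "f = (\<lambda>_. 0)"
    by blast
  moreover have "x \<in> words q n" "f \<in> words q n"
    using x f by (simp_all add: sum_code_def err_vecs_def)
  ultimately have "y = x"
    by (simp add: y_def add_mod_eq_self_iff)
  with \<open>y \<noteq> x\<close> show False ..
qed

lemma card_AED_le_chain: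
  assumes "0 < q" and C: "is_AED q n a h t C"
    and chain: "\<And>k l. k < l \<Longrightarrow> l \<le> m \<Longrightarrow> v k < v l \<and> v l - v k \<in> err_vecs q n a h t"
  shows "(m + 1) * card C \<le> q ^ n"
proof -
  have C_words: "C \<subseteq> words q n"
    using C by (simp add: is_AED_def)
  have chain_mono: "v k \<le> v l" if "k \<le> l" "l \<le> m" for k l
    using chain[of k l] that by (cases "k = l") auto
  define F where "F = (\<lambda>(c, k). add_mod q n c (v m - v k))"
  have F_neq: "F (c, k) \<noteq> F (c', l)" if c: "c \<in> C" "c' \<in> C" and kl: "k < l" "l \<le> m" for c c' k l
  proof
    assume eq: "F (c, k) = F (c', l)"
    define d where "d = v l - v k"
    have d_err: "d \<in> err_vecs q n a h t" and "v k < v l"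
      using chain[OF kl] by (simp_all add: d_def)
    have "v m - v k = (\<lambda>i. d i + (v m - v l) i)"
      using chain_mono[of k l] chain_mono[of l m] kl by (auto simp: d_def le_fun_def fun_eq_iff)
    then have "add_mod q n (add_mod q n c d) (v m - v l) = add_mod q n c' (v m - v l)"
      using eq by (simp add: F_def add_mod_add_mod)
    moreover have "add_mod q n c d \<in> words q n" "c' \<in> words q n"
      using add_mod_in_words[OF \<open>0 < q\<close>] C_words c(2) by auto
    ultimately have c': "add_mod q n c d = c'"
      using inj_onD[OF inj_on_add_mod[of q n "v m - v l"]] by blast
    then have "c' \<in> Out_cyc q n a h t c"
      using d_err by (auto simp: Out_cyc_def)
    with C c have "c' = c"
      unfolding is_AED_def by blast
    moreover have "d \<in> words q n" "c \<in> words q n"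
      using d_err C_words c(1) by (auto simp: err_vecs_def)
    ultimately have "d = (\<lambda>_. 0)"
      using c' add_mod_eq_self_iff by blast
    then have "v l \<le> v k"
      by (simp add: d_def le_fun_def fun_eq_iff)
    with \<open>v k < v l\<close> show False
      by (simp add: less_le_not_le)
  qed
  have F_inj: "c = c' \<and> k = l"
    if c: "c \<in> C" "c' \<in> C" and "k \<le> m" "l \<le> m" and eq: "F (c, k) = F (c', l)"
    for c c' k l
  proof -
    consider "k < l" | "l < k" | "k = l" by linarith
    then show "c = c' \<and> k = l"
    proof cases
      case 1
      then show ?thesis using F_neq[of c c' k l] c \<open>l \<le> m\<close> eq by simp
    next
      case 2
      then show ?thesis using F_neq[of c' c l k] c \<open>k \<le> m\<close> eq by simp
    next
      case 3
      then have "add_mod q n c (v m - v k) = add_mod q n c' (v m - v k)"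
        using eq by (simp add: F_def)
      with 3 c C_words show ?thesis
        using inj_onD[OF inj_on_add_mod[of q n "v m - v k"]] by blast
    qed
  qed
  have "inj_on F (C \<times> {..m})"
    by (auto simp: inj_on_def F_inj)
  moreover have "F ` (C \<times> {..m}) \<subseteq> words q n"
    using add_mod_in_words[OF \<open>0 < q\<close>] by (auto simp: F_def)
  ultimately have "card (C \<times> {..m}) \<le> card (words q n)"
    using finite_words by (intro card_inj_on_le)
  then show ?thesis
    by (simp add: card_cartesian_product card_words mult.commute)
qed

definition greedy_error :: "nat \<Rightarrow> nat \<Rightarrow> nat \<Rightarrow> nat \<Rightarrow> nat" where
  "greedy_error a h k = (\<lambda>i. if i < h then min a (k - a * i) else 0)"

lemma greedy_error_le: "greedy_error a h k i \<le> a"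
  by (simp add: greedy_error_def)

lemma mono_greedy_error: "k \<le> l \<Longrightarrow> greedy_error a h k \<le> greedy_error a h l"
  by (auto simp: greedy_error_def le_fun_def)

lemma sum_greedy_error:
  assumes "h \<le> n"
  shows "(\<Sum>i<n. greedy_error a h k i) = min k (a * h)"
proof -
  have "(\<Sum>i<n. greedy_error a h k i) = (\<Sum>i<h. min a (k - a * i))"
    using assms by (subst sum.mono_neutral_right[of "{..<n}" "{..<h}"]) (auto simp: greedy_error_def)
  also have "\<dots> = min k (a * h)"
  proof (induction h)
    case (Suc h)
    then show ?case by (cases "k \<le> a * h") (auto simp: min_def)
  qed simp
  finally show ?thesis .
qed

lemma greedy_error_chain:
  assumes "0 < q" "a \<le> q - 1" "h \<le> n" "t \<le> a * h" "k < l" "l \<le> t"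
  shows "greedy_error a h k < greedy_error a h l
    \<and> greedy_error a h l - greedy_error a h k \<in> err_vecs q n a h t"
proof -
  let ?g = "greedy_error a h"
  have le: "?g k \<le> ?g l"
    using assms(5) by (simp add: mono_greedy_error)
  have sum_diff: "(\<Sum>i<n. (?g l - ?g k) i) = l - k"
    using le assms by (simp add: le_fun_def sum_subtractf_nat sum_greedy_error)
  then have "?g k \<noteq> ?g l"
    using assms(5) by auto
  moreover have "?g l - ?g k \<in> err_vecs q n a h t"
  proof -
    have bounded: "(?g l - ?g k) i \<le> a" for i
      using greedy_error_le[of a h l i] by simp
    then have "(?g l - ?g k) i < q" for i
      using assms(1,2) le_less_trans[of _ a q] by fastforce
    moreover have "(?g l - ?g k) i = 0" if "n \<le> i" for i
      using that assms(3) by (simp add: greedy_error_def)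
    moreover have "{i. i < n \<and> (?g l - ?g k) i \<noteq> 0} \<subseteq> {..<h}"
      by (auto simp: greedy_error_def)
    then have "card {i. i < n \<and> (?g l - ?g k) i \<noteq> 0} \<le> h"
      using card_mono[of "{..<h}"] by fastforce
    ultimately show ?thesis
      using bounded sum_diff assms(6) by (simp add: err_vecs_def words_def not_le)
  qed
  ultimately show ?thesis
    using le by simp
qed

theorem theorem6:
  fixes q n a h t j :: nat
  assumes "0 < q" "0 < n" "0 < a" "0 < h" "0 < t"
    and "a \<le> q - 1" "h \<le> n" "a \<le> t" "t \<le> a * h"
    and "(t + 1) dvd q"
    and "j \<le> t"
  shows "is_AED q n a h t (sum_code q n t j)
    \<and> (\<forall>C. is_AED q n a h t C \<longrightarrow> card C \<le> card (sum_code q n t j))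
    \<and> card (sum_code q n t j) = q ^ n div (t + 1)"
proof -
  have card_eq: "(t + 1) * card (sum_code q n t j) = q ^ n"
    using assms(1,2,10,11) by (rule card_sum_code)
  have "card C \<le> card (sum_code q n t j)" if "is_AED q n a h t C" for C
  proof -
    have "(t + 1) * card C \<le> q ^ n"
      using assms(1) that greedy_error_chain[OF assms(1,6,7,9)] by (rule card_AED_le_chain)
    then have "(t + 1) * card C \<le> (t + 1) * card (sum_code q n t j)"
      by (simp only: card_eq)
    then show ?thesis by (rule mult_left_le_imp_le) simp
  qed
  moreover have "card (sum_code q n t j) = q ^ n div (t + 1)"
    using card_eq by (metis nonzero_mult_div_cancel_left add_eq_0_iff_both_eq_0 one_neq_zero)
  ultimately show ?thesis
    using sum_code_is_AED[OF assms(10)] by blast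
qed

end
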